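(* Let $n$ be a positive integer and let $\pi$ be chosen uniformly at random from the permutations of $[n]$ all of whose cycle lengths are odd. For an odd positive integer $k\le n$, let $Y_k$ be the number of elements of $[n]$ lying in $k$-cycles of $\pi$. Then \[ \mathbb{E}_o^{(n)}Y_k=\begin{cases}\dfrac{n(n-2)\cdots(n-k+1)}{(n-1)(n-3)\cdots(n-k)}, & n\text{ even},\\[2ex] \dfrac{(n-1)(n-3)\cdots(n-k+2)}{(n-2)(n-4)\cdots(n-k+1)}, & n\text{ odd},\end{cases} \] where an empty product equals $1$.
   Context: $\mathbb{E}_o^{(n)}$ denotes expectation under the uniform measure on permutations of $[n]$ with all cycle lengths odd. $Y_k=kX_k$, where $X_k$ is the number of $k$-cycles. *)

theory Defs
  imports Complex_Main "HOL-Combinatorics.Orbits"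
begin

definition odd_perms :: "nat \<Rightarrow> (nat \<Rightarrow> nat) set" where
  "odd_perms n = {p. p permutes {1..n} \<and> (\<forall>x\<in>{1..n}. odd (card (orbit p x)))}"

definition Y :: "nat \<Rightarrow> nat \<Rightarrow> (nat \<Rightarrow> nat) \<Rightarrow> nat" where
  "Y n k p = card {x \<in> {1..n}. card (orbit p x) = k}"

definition E_odd :: "nat \<Rightarrow> ((nat \<Rightarrow> nat) \<Rightarrow> real) \<Rightarrow> real" where
  "E_odd n f = (\<Sum>p\<in>odd_perms n. f p) / real (card (odd_perms n))"

end

theory Submission
  imports Defs "HOL-Combinatorics.Cycles"
begin

(*
  Fix a point x. An odd-cycle permutation in which x lies in a k-cycle is the cycle
  (x, l_1, ..., l_(k-1)) composed with an odd-cycle permutation of the remaining n - k points,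
  so there are (n-1)!/(n-k)! * o(n-k) of them, o(m) being the number of odd-cycle permutations
  of an m-set. Summing over odd k gives a recursion for o whose solution is o(n) = n! d(n),
  with d(2m) = d(2m+1) = prod_(j<m) (2j+1)/(2j+2). Double counting pairs (pi, x) then gives
  sum_pi Y_k(pi) = n * (n-1)! d(n-k), so E Y_k = d(n-k)/d(n), which telescopes to the products.
*)

lemma funpow_cycle_of_list_nth:
  assumes "distinct cs" "j < length cs"
  shows "(cycle_of_list cs ^^ i) (cs ! j) = cs ! ((i + j) mod length cs)"
proof -
  have "map (cycle_of_list cs ^^ i) cs ! j = rotate i cs ! j"
    using cyclic_rotation[OF assms(1), of i] by simp
  then show ?thesis using assms by (simp add: nth_rotate)
qed

lemma orbit_cycle_of_list:
  assumes "distinct cs" "y \<in> set cs"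
  shows "orbit (cycle_of_list cs) y = set cs"
proof
  show "orbit (cycle_of_list cs) y \<subseteq> set cs"
    by (rule permutes_orbit_subset[OF cycle_permutes assms(2)])
  show "set cs \<subseteq> orbit (cycle_of_list cs) y"
  proof
    fix z assume "z \<in> set cs"
    then obtain i where i: "i < length cs" "z = cs ! i" by (auto simp: in_set_conv_nth)
    obtain j where j: "j < length cs" "y = cs ! j" using assms(2) by (auto simp: in_set_conv_nth)
    have "(cycle_of_list cs ^^ (i + length cs - j)) y = z"
      using funpow_cycle_of_list_nth[OF assms(1) j(1)] i j by simp
    then show "z \<in> orbit (cycle_of_list cs) y"
      by (metis funpow_in_orbit permutation_of_cycle permutation_self_in_orbit)
  qed
qed

lemma least_power_cycle_of_list:
  assumes "distinct cs" "cs \<noteq> []"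
  shows "least_power (cycle_of_list cs) (hd cs) = length cs"
proof -
  let ?c = "cycle_of_list cs"
  have pow: "(?c ^^ i) (hd cs) = cs ! (i mod length cs)" for i
    using funpow_cycle_of_list_nth[OF assms(1), of 0 i] assms by (simp add: hd_conv_nth)
  have per: "(?c ^^ length cs) (hd cs) = hd cs" and len: "length cs > 0"
    using pow[of "length cs"] assms by (simp_all add: hd_conv_nth)
  have le: "least_power ?c (hd cs) \<le> length cs" by (rule least_power_le[OF per len])
  have fixed: "(?c ^^ least_power ?c (hd cs)) (hd cs) = hd cs"
    and pos: "least_power ?c (hd cs) > 0"
    by (rule least_powerI[OF per len])+
  show ?thesis
  proof (rule ccontr)
    assume "least_power ?c (hd cs) \<noteq> length cs"
    then have lt: "least_power ?c (hd cs) < length cs" using le by simp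
    have "cs ! (least_power ?c (hd cs) mod length cs) = hd cs" using fixed by (simp only: pow)
    with lt have "cs ! least_power ?c (hd cs) = cs ! 0" using assms by (simp add: hd_conv_nth)
    then show False using lt pos assms(1) nth_eq_iff_index_eq by fastforce
  qed
qed

lemma support_cycle_of_list:
  assumes "distinct cs" "cs \<noteq> []"
  shows "support (cycle_of_list cs) (hd cs) = cs"
proof -
  have "(cycle_of_list cs ^^ i) (hd cs) = cs ! i" if "i < length cs" for i
    using funpow_cycle_of_list_nth[OF assms(1), of 0 i] assms that by (simp add: hd_conv_nth)
  then show ?thesis
    by (intro nth_equalityI) (auto simp: least_power_cycle_of_list[OF assms])
qed

locale disjoint_cycle_comp =
  fixes cs :: "'a list" and q :: "'a \<Rightarrow> 'a" and A :: "'a set"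
  assumes distinct: "distinct cs" and q_permutes: "q permutes A" and disjoint: "set cs \<inter> A = {}"
begin

lemma q_fixes_cycle: "y \<in> set cs \<Longrightarrow> q y = y"
  using disjoint by (auto intro: permutes_not_in[OF q_permutes])

lemma cycle_fixes_image: "y \<in> A \<Longrightarrow> cycle_of_list cs (q y) = q y"
  using disjoint permutes_in_image[OF q_permutes, of y] by (auto intro: id_outside_supp)

lemma comp_permutes: "(cycle_of_list cs \<circ> q) permutes (set cs \<union> A)"
  using cycle_permutes[of cs] q_permutes
  by (intro permutes_compose) (auto intro: permutes_subset)

lemma funpow_comp_in_cycle:
  "y \<in> set cs \<Longrightarrow> ((cycle_of_list cs \<circ> q) ^^ i) y = (cycle_of_list cs ^^ i) y"
  by (induction i)
    (auto simp: q_fixes_cycle permutes_in_image[OF permutes_funpow[OF cycle_permutes]])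

lemma orbit_comp_in_cycle: "y \<in> set cs \<Longrightarrow> orbit (cycle_of_list cs \<circ> q) y = set cs"
  using orbit_cycle_of_list[OF distinct]
  by (simp add: orbit_altdef funpow_comp_in_cycle)

lemma orbit_comp_outside_cycle: "y \<in> A \<Longrightarrow> orbit (cycle_of_list cs \<circ> q) y = orbit q y"
  by (intro orbit_cong0[where A = A]) (auto simp: cycle_fixes_image permutes_in_image[OF q_permutes])

lemma support_comp: "cs \<noteq> [] \<Longrightarrow> support (cycle_of_list cs \<circ> q) (hd cs) = cs"
  using support_cycle_of_list[OF distinct] by (simp add: least_power_def funpow_comp_in_cycle)

lemma perm_restrict_comp: "perm_restrict (cycle_of_list cs \<circ> q) A = q"
  by (auto simp: fun_eq_iff perm_restrict_def cycle_fixes_image permutes_not_in[OF q_permutes])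

end

lemma set_support_eq_orbit:
  assumes "permutation p"
  shows "set (support p x) = orbit p x"
  unfolding support_set[OF assms] orbit_altdef_permutation[OF assms] by (simp add: full_SetCompr_eq)

lemma support_eq_Cons: "permutation p \<Longrightarrow> support p x = x # tl (support p x)"
  using least_power_of_permutation(2)[of p x] by (cases "least_power p x") (auto simp: upt_rec)

lemma cycle_of_support_comp_perm_restrict:
  assumes "p permutes S" "finite S"
  shows "cycle_of_list (support p x) \<circ> perm_restrict p (S - orbit p x) = p"
proof
  fix y
  have perm: "permutation p" using assms permutation_permutes by blast
  show "(cycle_of_list (support p x) \<circ> perm_restrict p (S - orbit p x)) y = p y"
  proof (cases "y \<in> orbit p x")
    case True
    then show ?thesis
      using cycle_restrict[OF perm, of y x] set_support_eq_orbit[OF perm]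
      by (simp add: perm_restrict_simps)
  next
    case False
    have "perm_restrict p (S - orbit p x) y = p y"
      using False by (cases "y \<in> S") (auto simp: perm_restrict_simps permutes_not_in[OF assms(1)])
    moreover have "p y \<notin> orbit p x"
      using False cyclic_on_f_in[OF assms(1) cyclic_on_orbit[OF assms]] by blast
    ultimately show ?thesis
      using set_support_eq_orbit[OF perm] by (simp add: id_outside_supp)
  qed
qed

lemma disjoint_cycle_comp_support:
  assumes "p permutes S" "finite S"
  shows "disjoint_cycle_comp (support p x) (perm_restrict p (S - orbit p x)) (S - orbit p x)"
proof
  have perm: "permutation p" using assms permutation_permutes by blast
  then show "distinct (support p x)" by (rule cycle_of_permutation)
  show "set (support p x) \<inter> (S - orbit p x) = {}"
    unfolding set_support_eq_orbit[OF perm] by blast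
  show "perm_restrict p (S - orbit p x) permutes (S - orbit p x)"
    using perm_restrict_diff_cyclic[OF assms(1) cyclic_on_orbit[OF assms]] .
qed

definition odd_cycle_perms :: "'a set \<Rightarrow> ('a \<Rightarrow> 'a) set" where
  "odd_cycle_perms S = {p. p permutes S \<and> (\<forall>x\<in>S. odd (card (orbit p x)))}"

lemma finite_odd_cycle_perms: "finite S \<Longrightarrow> finite (odd_cycle_perms S)"
  by (rule finite_subset[OF _ finite_permutations[of S]]) (auto simp: odd_cycle_perms_def)

lemma odd_cycle_perms_empty: "odd_cycle_perms {} = {id}"
  by (auto simp: odd_cycle_perms_def)

lemma (in disjoint_cycle_comp) comp_mem_odd_cycle_perms_iff:
  assumes "odd (length cs)"
  shows "cycle_of_list cs \<circ> q \<in> odd_cycle_perms (set cs \<union> A) \<longleftrightarrow> q \<in> odd_cycle_perms A"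
proof -
  have "\<forall>y\<in>set cs. odd (card (orbit (cycle_of_list cs \<circ> q) y))"
    using assms orbit_comp_in_cycle distinct_card[OF distinct] by simp
  moreover have "(\<forall>y\<in>A. odd (card (orbit (cycle_of_list cs \<circ> q) y))) \<longleftrightarrow> (\<forall>y\<in>A. odd (card (orbit q y)))"
    using orbit_comp_outside_cycle by simp
  ultimately show ?thesis
    using comp_permutes q_permutes by (simp add: odd_cycle_perms_def ball_Un)
qed

definition cycle_tails :: "'a set \<Rightarrow> 'a \<Rightarrow> nat \<Rightarrow> 'a list set" where
  "cycle_tails S x k = {l. length l = k - 1 \<and> distinct l \<and> set l \<subseteq> S - {x}}"

lemma disjoint_cycle_comp_cycle_tails:
  assumes "l \<in> cycle_tails S x k" "x \<in> S" "q \<in> odd_cycle_perms (S - set (x # l))"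
  shows "disjoint_cycle_comp (x # l) q (S - set (x # l))"
  using assms by unfold_locales (auto simp: cycle_tails_def odd_cycle_perms_def)

lemma cycle_comp_mem_odd_cycle_perms:
  assumes "x \<in> S" "odd k" "l \<in> cycle_tails S x k" "q \<in> odd_cycle_perms (S - set (x # l))"
  shows "cycle_of_list (x # l) \<circ> q \<in> odd_cycle_perms S"
    and "card (orbit (cycle_of_list (x # l) \<circ> q) x) = k"
proof -
  interpret disjoint_cycle_comp "x # l" q "S - set (x # l)"
    using disjoint_cycle_comp_cycle_tails[OF assms(3,1,4)] .
  have "set (x # l) \<union> (S - set (x # l)) = S" "length (x # l) = k"
    using assms(1-3) odd_pos[OF assms(2)] by (auto simp: cycle_tails_def)
  then show "cycle_of_list (x # l) \<circ> q \<in> odd_cycle_perms S"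
    and "card (orbit (cycle_of_list (x # l) \<circ> q) x) = k"
    using comp_mem_odd_cycle_perms_iff assms(2,4) orbit_comp_in_cycle distinct_card[OF distinct]
    by simp_all
qed

lemma support_decomposition_mem:
  assumes "finite S" "x \<in> S" "odd k" "p \<in> odd_cycle_perms S" "card (orbit p x) = k"
  shows "tl (support p x) \<in> cycle_tails S x k"
    and "perm_restrict p (S - orbit p x) \<in> odd_cycle_perms (S - set (x # tl (support p x)))"
proof -
  have p_permutes: "p permutes S" using assms(4) by (simp add: odd_cycle_perms_def)
  then have perm: "permutation p" using assms(1) permutation_permutes by blast
  interpret disjoint_cycle_comp "support p x" "perm_restrict p (S - orbit p x)" "S - orbit p x"
    using disjoint_cycle_comp_support[OF p_permutes assms(1)] .
  have cons: "x # tl (support p x) = support p x" using support_eq_Cons[OF perm] by simp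
  have orbit: "set (support p x) = orbit p x" using set_support_eq_orbit[OF perm] .
  have length: "length (support p x) = k" using assms(5) orbit distinct_card[OF distinct] by simp
  have "distinct (x # tl (support p x))" "set (x # tl (support p x)) \<subseteq> S"
    "length (x # tl (support p x)) = k"
    unfolding cons using distinct orbit length permutes_orbit_subset[OF p_permutes assms(2)] by simp_all
  then show "tl (support p x) \<in> cycle_tails S x k" by (auto simp: cycle_tails_def)
  have "orbit p x \<union> (S - orbit p x) = S" using permutes_orbit_subset[OF p_permutes assms(2)] by auto
  then have "cycle_of_list (support p x) \<circ> perm_restrict p (S - orbit p x)
      \<in> odd_cycle_perms (set (support p x) \<union> (S - orbit p x))"
    using assms(4) orbit cycle_of_support_comp_perm_restrict[OF p_permutes assms(1)] by simp
  then have "perm_restrict p (S - orbit p x) \<in> odd_cycle_perms (S - orbit p x)"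
    using comp_mem_odd_cycle_perms_iff length assms(3) by blast
  then show "perm_restrict p (S - orbit p x) \<in> odd_cycle_perms (S - set (x # tl (support p x)))"
    unfolding cons orbit .
qed

lemma bij_betw_odd_cycle_perms_orbit_card:
  assumes "finite S" "x \<in> S" "odd k"
  shows "bij_betw (\<lambda>(l, q). cycle_of_list (x # l) \<circ> q)
    (SIGMA l:cycle_tails S x k. odd_cycle_perms (S - set (x # l)))
    {p \<in> odd_cycle_perms S. card (orbit p x) = k}"
proof (rule bij_betw_byWitness[where f' = "\<lambda>p. (tl (support p x), perm_restrict p (S - orbit p x))"])
  show "\<forall>a \<in> (SIGMA l:cycle_tails S x k. odd_cycle_perms (S - set (x # l))).
      (\<lambda>p. (tl (support p x), perm_restrict p (S - orbit p x))) ((\<lambda>(l, q). cycle_of_list (x # l) \<circ> q) a) = a"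
  proof clarify
    fix l q assume l: "l \<in> cycle_tails S x k" and q: "q \<in> odd_cycle_perms (S - set (x # l))"
    interpret disjoint_cycle_comp "x # l" q "S - set (x # l)"
      using disjoint_cycle_comp_cycle_tails[OF l assms(2) q] .
    show "tl (support (cycle_of_list (x # l) \<circ> q) x) = l \<and>
        perm_restrict (cycle_of_list (x # l) \<circ> q) (S - orbit (cycle_of_list (x # l) \<circ> q) x) = q"
      using support_comp orbit_comp_in_cycle perm_restrict_comp by simp
  qed
  show "\<forall>p \<in> {p \<in> odd_cycle_perms S. card (orbit p x) = k}.
      (\<lambda>(l, q). cycle_of_list (x # l) \<circ> q) ((\<lambda>p. (tl (support p x), perm_restrict p (S - orbit p x))) p) = p"
  proof clarify
    fix p assume "p \<in> odd_cycle_perms S"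
    then have p_permutes: "p permutes S" by (simp add: odd_cycle_perms_def)
    then have "permutation p" using assms(1) permutation_permutes by blast
    then show "cycle_of_list (x # tl (support p x)) \<circ> perm_restrict p (S - orbit p x) = p"
      using support_eq_Cons cycle_of_support_comp_perm_restrict[OF p_permutes assms(1)] by metis
  qed
  show "(\<lambda>(l, q). cycle_of_list (x # l) \<circ> q) ` (SIGMA l:cycle_tails S x k. odd_cycle_perms (S - set (x # l)))
      \<subseteq> {p \<in> odd_cycle_perms S. card (orbit p x) = k}"
    using cycle_comp_mem_odd_cycle_perms[OF assms(2,3)] by auto
  show "(\<lambda>p. (tl (support p x), perm_restrict p (S - orbit p x))) ` {p \<in> odd_cycle_perms S. card (orbit p x) = k}
      \<subseteq> (SIGMA l:cycle_tails S x k. odd_cycle_perms (S - set (x # l)))"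
    using support_decomposition_mem[OF assms] by auto
qed

lemma card_distinct_lists_mult_fact:
  assumes "finite A" "m \<le> card A"
  shows "card {l. length l = m \<and> distinct l \<and> set l \<subseteq> A} * fact (card A - m) = fact (card A)"
  using card_lists_distinct_length_eq[OF assms] fact_eq_fact_times[of "card A - m" "card A"] assms(2)
  by (simp add: Suc_diff_le)

lemma finite_cycle_tails: "finite S \<Longrightarrow> finite (cycle_tails S x k)"
  unfolding cycle_tails_def
  by (rule finite_subset[OF _ finite_lists_length_eq[of "S - {x}" "k - 1"]]) auto

lemma card_cycle_tails:
  assumes "finite S" "x \<in> S" "1 \<le> k" "k \<le> card S"
  shows "card (cycle_tails S x k) * fact (card S - k) = fact (card S - 1)"
proof -
  have "card S - k = card (S - {x}) - (k - 1)" "card S - 1 = card (S - {x})" "k - 1 \<le> card (S - {x})"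
    using card_Diff_singleton[OF assms(2)] assms(3,4) by simp_all
  then show ?thesis
    using card_distinct_lists_mult_fact[of "S - {x}" "k - 1"] assms(1) by (simp add: cycle_tails_def)
qed

(* The count is stated relative to the number c of odd-cycle permutations of the leftover
   (card S - k)-sets, so that it can be used inside the induction proving that number. *)
lemma card_odd_cycle_perms_orbit_card:
  assumes "finite S" "x \<in> S" "odd k" "k \<le> card S"
    and card_rest: "\<And>T. T \<subseteq> S \<Longrightarrow> card T = card S - k \<Longrightarrow> real (card (odd_cycle_perms T)) = fact (card T) * c"
  shows "real (card {p \<in> odd_cycle_perms S. card (orbit p x) = k}) = fact (card S - 1) * c"
proof -
  let ?L = "cycle_tails S x k"
  have k_pos: "k \<ge> 1" using odd_pos[OF assms(3)] by simp
  have card_rest_l: "real (card (odd_cycle_perms (S - set (x # l)))) = fact (card S - k) * c"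
    if l: "l \<in> ?L" for l
  proof -
    have sub: "set (x # l) \<subseteq> S" and len: "length (x # l) = k" and dist: "distinct (x # l)"
      using l assms(2) k_pos by (auto simp: cycle_tails_def)
    have "card (S - set (x # l)) = card S - k"
      using card_Diff_subset[OF List.finite_set sub] distinct_card[OF dist] len by simp
    then show ?thesis using card_rest[OF Diff_subset] by simp
  qed
  have "card {p \<in> odd_cycle_perms S. card (orbit p x) = k}
      = card (SIGMA l:?L. odd_cycle_perms (S - set (x # l)))"
    by (rule bij_betw_same_card[OF bij_betw_odd_cycle_perms_orbit_card[OF assms(1-3)], symmetric])
  also have "\<dots> = (\<Sum>l\<in>?L. card (odd_cycle_perms (S - set (x # l))))"
    using finite_cycle_tails[OF assms(1)] finite_odd_cycle_perms[OF finite_Diff[OF assms(1)]]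
    by (intro card_SigmaI) auto
  finally have "real (card {p \<in> odd_cycle_perms S. card (orbit p x) = k})
      = (\<Sum>l\<in>?L. real (card (odd_cycle_perms (S - set (x # l)))))"
    by simp
  also have "\<dots> = real (card ?L * fact (card S - k)) * c"
    using card_rest_l by simp
  also have "\<dots> = fact (card S - 1) * c"
    using card_cycle_tails[OF assms(1,2) k_pos assms(4)] by (simp only: of_nat_fact)
  finally show ?thesis .
qed

lemma card_odd_cycle_perms_eq_sum:
  assumes "finite S" "x \<in> S"
  shows "card (odd_cycle_perms S)
    = (\<Sum>j<(card S + 1) div 2. card {p \<in> odd_cycle_perms S. card (orbit p x) = 2 * j + 1})"
proof -
  let ?C = "\<lambda>j. {p \<in> odd_cycle_perms S. card (orbit p x) = 2 * j + 1}"
  have "odd_cycle_perms S = (\<Union>j<(card S + 1) div 2. ?C j)"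
  proof (intro set_eqI iffI)
    fix p assume p: "p \<in> odd_cycle_perms S"
    then have "odd (card (orbit p x))" and "card (orbit p x) \<le> card S"
      using assms card_mono[OF assms(1) permutes_orbit_subset]
      by (auto simp: odd_cycle_perms_def)
    moreover from \<open>odd (card (orbit p x))\<close> obtain j where j: "card (orbit p x) = 2 * j + 1"
      by (rule oddE)
    ultimately have "j < (card S + 1) div 2" by presburger
    then show "p \<in> (\<Union>j<(card S + 1) div 2. ?C j)" using p j by blast
  qed auto
  moreover have "card (\<Union>j<(card S + 1) div 2. ?C j) = (\<Sum>j<(card S + 1) div 2. card (?C j))"
    using finite_odd_cycle_perms[OF assms(1)] by (intro card_UN_disjoint) auto
  ultimately show ?thesis by simp
qed

(* d(2m) = d(2m+1) = prod_(j<m) (2j+1)/(2j+2) = (2m choose m)/4^m *)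
fun odd_cycle_density :: "nat \<Rightarrow> real" where
  "odd_cycle_density 0 = 1"
| "odd_cycle_density (Suc n) =
    (if even n then odd_cycle_density n else odd_cycle_density n * real n / real (Suc n))"

lemma odd_cycle_density_pos: "odd_cycle_density n > 0"
  by (induction n) (simp_all add: odd_pos)

lemma odd_cycle_density_odd: "odd_cycle_density (2 * m + 1) = odd_cycle_density (2 * m)"
  by simp

lemma odd_cycle_density_even_step:
  "odd_cycle_density (2 * m + 2) = odd_cycle_density (2 * m) * (2 * real m + 1) / (2 * real m + 2)"
proof -
  have "2 * m + 2 = Suc (Suc (2 * m))" by simp
  then show ?thesis by (simp add: add.commute)
qed

lemma sum_odd_cycle_density:
  "(\<Sum>j<(n + 1) div 2. odd_cycle_density (n - Suc (2 * j))) = real n * odd_cycle_density n"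
proof (induction n rule: nat_induct2)
  case (step n)
  have "(n + 2 + 1) div 2 = Suc ((n + 1) div 2)" by simp
  then have "(\<Sum>j<(n + 2 + 1) div 2. odd_cycle_density (n + 2 - Suc (2 * j)))
      = odd_cycle_density (n + 1) + (\<Sum>j<(n + 1) div 2. odd_cycle_density (n - Suc (2 * j)))"
    by (simp only: sum.lessThan_Suc_shift) simp
  also have "\<dots> = odd_cycle_density (n + 1) + real n * odd_cycle_density n"
    using step.IH by simp
  also have "\<dots> = real (n + 2) * odd_cycle_density (n + 2)"
    by (cases "even n") (auto simp: field_simps elim!: oddE)
  finally show ?case .
qed simp_all

lemma odd_cycle_density_ratio:
  assumes "even m" "2 * t \<le> m"
  shows "odd_cycle_density (m - 2 * t) / odd_cycle_density m
    = (\<Prod>j<t. real m - 2 * real j) / (\<Prod>j<t. real m - 1 - 2 * real j)"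
  using assms(2)
proof (induction t)
  case (Suc t)
  obtain h where h: "m = 2 * h" using assms(1) by blast
  define e where "e = h - Suc t"
  have m_eq: "m - 2 * t = 2 * e + 2" "m - 2 * Suc t = 2 * e"
    and real_e: "2 * real e = real m - 2 * real t - 2"
    using Suc.prems by (simp_all add: h e_def of_nat_diff)
  have step: "odd_cycle_density (2 * e) / odd_cycle_density (2 * e + 2)
      = (real m - 2 * real t) / (real m - 1 - 2 * real t)"
  proof -
    have "real m - 2 * real t = 2 * real e + 2" "real m - 1 - 2 * real t = 2 * real e + 1"
      using real_e by simp_all
    moreover have "(2 * real e + 1) \<noteq> 0" "(2 * real e + 2) \<noteq> 0" by linarith+
    ultimately show ?thesis
      using odd_cycle_density_pos[of "2 * e"] by (simp add: odd_cycle_density_even_step)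
  qed
  have "odd_cycle_density (m - 2 * Suc t) / odd_cycle_density m
      = odd_cycle_density (2 * e) / odd_cycle_density (2 * e + 2)
        * (odd_cycle_density (m - 2 * t) / odd_cycle_density m)"
    unfolding m_eq using odd_cycle_density_pos[of "2 * e + 2"] by simp
  also have "\<dots> = (real m - 2 * real t) / (real m - 1 - 2 * real t)
      * ((\<Prod>j<t. real m - 2 * real j) / (\<Prod>j<t. real m - 1 - 2 * real j))"
    using step Suc by simp
  finally show ?case by (simp add: times_divide_times_eq mult.commute)
qed (use odd_cycle_density_pos[of m] in simp)

lemma odd_cycle_density_quotient:
  assumes "odd k" "k \<le> n"
  shows "odd_cycle_density (n - k) / odd_cycle_density n =
    (if even n
     then (\<Prod>j<(k+1) div 2. real n - 2 * real j) / (\<Prod>j<(k+1) div 2. real n - 1 - 2 * real j)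
     else (\<Prod>j<(k-1) div 2. real n - 1 - 2 * real j) / (\<Prod>j<(k-1) div 2. real n - 2 - 2 * real j))"
proof (cases "even n")
  case True
  obtain i where i: "k = 2 * i + 1" using assms(1) by (rule oddE)
  have le: "2 * (i + 1) \<le> n" using True assms(2) i by presburger
  obtain b where "n - 2 * (i + 1) = 2 * b" using True le by (metis dvd_diff_nat dvd_triv_left evenE)
  moreover have "n - k = n - 2 * (i + 1) + 1" using le i by simp
  ultimately have "odd_cycle_density (n - k) = odd_cycle_density (n - 2 * (i + 1))"
    by (simp only: odd_cycle_density_odd)
  moreover have "(k + 1) div 2 = i + 1" using i by simp
  ultimately show ?thesis
    using odd_cycle_density_ratio[OF True le] True by simp
next
  case False
  then obtain h where h: "n = 2 * h + 1" by (rule oddE)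
  obtain i where i: "k = 2 * i + 1" using assms(1) by (rule oddE)
  have "2 * i \<le> 2 * h" using assms(2) h i by simp
  then have "odd_cycle_density (2 * h - 2 * i) / odd_cycle_density (2 * h)
      = (\<Prod>j<i. real (2 * h) - 2 * real j) / (\<Prod>j<i. real (2 * h) - 1 - 2 * real j)"
    by (intro odd_cycle_density_ratio) simp
  moreover have "n - k = 2 * h - 2 * i" using h i by simp
  ultimately show ?thesis
    using False h i by (simp add: odd_cycle_density_odd algebra_simps)
qed

lemma card_odd_cycle_perms:
  "finite S \<Longrightarrow> real (card (odd_cycle_perms S)) = fact (card S) * odd_cycle_density (card S)"
proof (induction "card S" arbitrary: S rule: less_induct)
  case less
  show ?case
  proof (cases "S = {}")
    case True
    then show ?thesis by (simp add: odd_cycle_perms_empty)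
  next
    case False
    then obtain x where x: "x \<in> S" by blast
    define n where "n = card S"
    have n_pos: "n > 0" using less.prems x by (auto simp: n_def card_gt_0_iff)
    have orbit_card: "real (card {p \<in> odd_cycle_perms S. card (orbit p x) = 2 * j + 1})
        = fact (n - 1) * odd_cycle_density (n - Suc (2 * j))" if "j < (n + 1) div 2" for j
    proof -
      have "2 * j + 1 \<le> card S" using that by (simp add: n_def)
      moreover have "real (card (odd_cycle_perms T)) = fact (card T) * odd_cycle_density (n - Suc (2 * j))"
        if "T \<subseteq> S" "card T = card S - (2 * j + 1)" for T
        using less.hyps[of T] that less.prems n_pos finite_subset by (auto simp: n_def)
      ultimately show ?thesis
        using card_odd_cycle_perms_orbit_card[OF less.prems x] by (simp add: n_def)
    qed
    have "real (card (odd_cycle_perms S))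
        = (\<Sum>j<(n + 1) div 2. fact (n - 1) * odd_cycle_density (n - Suc (2 * j)))"
      using card_odd_cycle_perms_eq_sum[OF less.prems x] orbit_card by (simp add: n_def)
    also have "\<dots> = fact (n - 1) * (real n * odd_cycle_density n)"
      using sum_odd_cycle_density[of n] by (simp add: sum_distrib_left[symmetric])
    also have "\<dots> = fact n * odd_cycle_density n"
      using n_pos by (simp add: fact_reduce)
    finally show ?thesis by (simp add: n_def)
  qed
qed

lemma sum_card_filter_swap:
  assumes "finite A" "finite B"
  shows "(\<Sum>a\<in>A. card {b \<in> B. P a b}) = (\<Sum>b\<in>B. card {a \<in> A. P a b})"
proof -
  have card_filter: "card {x \<in> X. Q x} = (\<Sum>x\<in>X. of_bool (Q x))" if "finite X" for X Q
    using that by (simp add: Int_def)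
  have "(\<Sum>a\<in>A. card {b \<in> B. P a b}) = (\<Sum>a\<in>A. \<Sum>b\<in>B. of_bool (P a b))"
    using card_filter[OF assms(2)] by (simp only:)
  also have "\<dots> = (\<Sum>b\<in>B. \<Sum>a\<in>A. of_bool (P a b))"
    by (rule sum.swap)
  also have "\<dots> = (\<Sum>b\<in>B. card {a \<in> A. P a b})"
    using card_filter[OF assms(1)] by (simp only:)
  finally show ?thesis .
qed

lemma sum_card_in_cycles_of_length:
  assumes "finite S" "odd k" "k \<le> card S"
  shows "real (\<Sum>p\<in>odd_cycle_perms S. card {x \<in> S. card (orbit p x) = k})
    = fact (card S) * odd_cycle_density (card S - k)"
proof -
  have card_rest: "real (card (odd_cycle_perms T)) = fact (card T) * odd_cycle_density (card S - k)"
    if "T \<subseteq> S" "card T = card S - k" for T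
    using card_odd_cycle_perms[OF finite_subset[OF that(1) assms(1)]] that(2) by simp
  have "real (\<Sum>p\<in>odd_cycle_perms S. card {x \<in> S. card (orbit p x) = k})
      = (\<Sum>x\<in>S. real (card {p \<in> odd_cycle_perms S. card (orbit p x) = k}))"
    using sum_card_filter_swap[OF finite_odd_cycle_perms[OF assms(1)] assms(1)] by simp
  also have "\<dots> = (\<Sum>x\<in>S. fact (card S - 1) * odd_cycle_density (card S - k))"
    by (intro sum.cong refl card_odd_cycle_perms_orbit_card[OF assms(1) _ assms(2,3) card_rest])
  also have "\<dots> = fact (card S) * odd_cycle_density (card S - k)"
    using odd_pos[OF assms(2)] assms(3) by (simp add: fact_reduce)
  finally show ?thesis .
qed

theorem proposition3p2:
  fixes n k :: nat
  assumes "n \<ge> 1" and "odd k" and "k \<le> n"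
  shows "E_odd n (\<lambda>p. real (Y n k p)) =
    (if even n
     then (\<Prod>j<(k+1) div 2. real n - 2 * real j) / (\<Prod>j<(k+1) div 2. real n - 1 - 2 * real j)
     else (\<Prod>j<(k-1) div 2. real n - 1 - 2 * real j) / (\<Prod>j<(k-1) div 2. real n - 2 - 2 * real j))"
    (is "_ = ?rhs")
proof -
  have "odd_perms n = odd_cycle_perms {1..n}"
    by (simp add: odd_perms_def odd_cycle_perms_def)
  then have "E_odd n (\<lambda>p. real (Y n k p))
      = real (\<Sum>p\<in>odd_cycle_perms {1..n}. card {x \<in> {1..n}. card (orbit p x) = k})
        / real (card (odd_cycle_perms {1..n}))"
    unfolding E_odd_def Y_def of_nat_sum by (simp only:)
  also have "\<dots> = fact n * odd_cycle_density (n - k) / (fact n * odd_cycle_density n)"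
    using sum_card_in_cycles_of_length[of "{1..n}" k] card_odd_cycle_perms[of "{1..n}"] assms(2,3)
    by simp
  also have "\<dots> = odd_cycle_density (n - k) / odd_cycle_density n"
    by (rule mult_divide_mult_cancel_left) simp
  also have "\<dots> = ?rhs"
    by (rule odd_cycle_density_quotient[OF assms(2,3)])
  finally show ?thesis .
qed

end
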